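(* Given a fair division instance with $3$ agents, $4$ items, and normalised additive valuations, an EQ $+$ EQ1 allocation may not exist.
   Context: Fair division of indivisible goods among agents with additive valuations $v_i$. Valuations are normalised if every agent assigns the same value to the full set of items. An (integral) allocation $A=(A_1,\dots,A_n)$ is EQ1 (equitable up to one good) if for every pair of agents $i,j$ with $A_i\neq\emptyset$ there is a good $g\in A_i$ with $v_i(A_i\setminus\{g\})\le v_j(A_j)$. An EQ $+$ EQ1 allocation is a randomized allocation (a probability distribution over integral allocations) that is ex ante equitable, i.e. all agents have equal expected value $\mathbb{E}[v_i(X_i)]$, and whose support consists only of EQ1 integral allocations. *)

theory Defs
  imports "HOL-Probability.Probability_Mass_Function"
begin

(* Agents are 0..<n, items are 0..<m. A valuation profile is v :: nat => nat => real,
  where v i g is agent i's value for item g; values of bundles are additive. *)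

definition val :: "(nat \<Rightarrow> nat \<Rightarrow> real) \<Rightarrow> nat \<Rightarrow> nat set \<Rightarrow> real" where
  "val v i S = (\<Sum>g\<in>S. v i g)"

definition nonneg_vals :: "nat \<Rightarrow> nat \<Rightarrow> (nat \<Rightarrow> nat \<Rightarrow> real) \<Rightarrow> bool" where
  "nonneg_vals n m v \<longleftrightarrow> (\<forall>i<n. \<forall>g<m. 0 \<le> v i g)"

definition normalised :: "nat \<Rightarrow> nat \<Rightarrow> (nat \<Rightarrow> nat \<Rightarrow> real) \<Rightarrow> bool" where
  "normalised n m v \<longleftrightarrow> (\<forall>i<n. \<forall>j<n. val v i {0..<m} = val v j {0..<m})"

definition is_alloc :: "nat \<Rightarrow> nat \<Rightarrow> (nat \<Rightarrow> nat) \<Rightarrow> bool" where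
  "is_alloc n m a \<longleftrightarrow> (\<forall>g<m. a g < n)"

definition bundle_of :: "nat \<Rightarrow> (nat \<Rightarrow> nat) \<Rightarrow> nat \<Rightarrow> nat set" where
  "bundle_of m a i = {g. g < m \<and> a g = i}"

definition EQ1 :: "nat \<Rightarrow> nat \<Rightarrow> (nat \<Rightarrow> nat \<Rightarrow> real) \<Rightarrow> (nat \<Rightarrow> nat) \<Rightarrow> bool" where
  "EQ1 n m v a \<longleftrightarrow> (\<forall>i<n. \<forall>j<n. bundle_of m a i \<noteq> {} \<longrightarrow>
      (\<exists>g\<in>bundle_of m a i. val v i (bundle_of m a i - {g}) \<le> val v j (bundle_of m a j)))"

definition EQ_EQ1 :: "nat \<Rightarrow> nat \<Rightarrow> (nat \<Rightarrow> nat \<Rightarrow> real) \<Rightarrow> (nat \<Rightarrow> nat) pmf \<Rightarrow> bool" where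
  "EQ_EQ1 n m v p \<longleftrightarrow>
     (\<forall>a\<in>set_pmf p. is_alloc n m a \<and> EQ1 n m v a) \<and>
     (\<forall>i<n. \<forall>j<n. measure_pmf.expectation p (\<lambda>a. val v i (bundle_of m a i))
                 = measure_pmf.expectation p (\<lambda>a. val v j (bundle_of m a j)))"

end

theory Submission
  imports Defs
begin

(* An ex ante equitable lottery gives all agents the same expected utility, so every weighting
  c of the agents with zero total weight has expected weighted utility 0. Hence no such lottery
  can be supported on EQ1 allocations if some zero-sum weighting is positive on every EQ1
  allocation. For the valuations (2,0,0,8), (1,4,4,1), (3,0,0,7) the weights (5,-9,4) do this,
  as a check of all 3^4 allocations shows. *)

lemma bundle_of_0 [simp]: "bundle_of 0 a i = {}"
  by (simp add: bundle_of_def)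

lemma bundle_of_Suc:
  "bundle_of (Suc m) a i = (if a m = i then insert m (bundle_of m a i) else bundle_of m a i)"
  by (auto simp: bundle_of_def less_Suc_eq)

lemma bundle_of_subset: "bundle_of m a i \<subseteq> {..<m}"
  by (auto simp: bundle_of_def)

lemma abs_val_bundle_of_le: "\<bar>val v i (bundle_of m a i)\<bar> \<le> (\<Sum>g<m. \<bar>v i g\<bar>)"
proof -
  have "\<bar>val v i (bundle_of m a i)\<bar> \<le> (\<Sum>g\<in>bundle_of m a i. \<bar>v i g\<bar>)"
    unfolding val_def by (rule sum_abs)
  also have "\<dots> \<le> (\<Sum>g<m. \<bar>v i g\<bar>)"
    by (rule sum_mono2) (auto simp: bundle_of_subset)
  finally show ?thesis .
qed

lemma integrable_val_bundle_of:
  "integrable (measure_pmf p) (\<lambda>a. val v i (bundle_of m a i))"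
  by (rule measure_pmf.integrable_const_bound[where B = "\<Sum>g<m. \<bar>v i g\<bar>"])
     (simp_all add: abs_val_bundle_of_le)

lemma not_EQ_EQ1_if_positive_zero_sum_weighting:
  fixes c :: "nat \<Rightarrow> real"
  assumes zero_sum: "(\<Sum>i<n. c i) = 0" and "0 < d"
    and positive: "\<And>a. is_alloc n m a \<Longrightarrow> EQ1 n m v a \<Longrightarrow>
                     d \<le> (\<Sum>i<n. c i * val v i (bundle_of m a i))"
  shows "\<not> EQ_EQ1 n m v p"
proof
  assume p: "EQ_EQ1 n m v p"
  define E where "E i = measure_pmf.expectation p (\<lambda>a. val v i (bundle_of m a i))" for i
  have equitable: "E i = E 0" if "i < n" for i
  proof -
    have "0 < n"
      using that by simp
    with p that show ?thesis
      unfolding EQ_EQ1_def E_def by blast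
  qed
  have "d \<le> measure_pmf.expectation p (\<lambda>a. \<Sum>i<n. c i * val v i (bundle_of m a i))"
  proof (rule measure_pmf.integral_ge_const)
    show "integrable (measure_pmf p) (\<lambda>a. \<Sum>i<n. c i * val v i (bundle_of m a i))"
      by (simp add: integrable_val_bundle_of)
    show "AE a in measure_pmf p. d \<le> (\<Sum>i<n. c i * val v i (bundle_of m a i))"
      using p positive by (auto simp: AE_measure_pmf_iff EQ_EQ1_def)
  qed
  also have "\<dots> = (\<Sum>i<n. c i * E i)"
    by (simp add: E_def integrable_val_bundle_of)
  also have "\<dots> = (\<Sum>i<n. c i * E 0)"
    by (intro sum.cong refl) (metis equitable lessThan_iff)
  also have "\<dots> = 0"
    by (simp add: zero_sum flip: sum_distrib_right)
  finally show False
    using \<open>0 < d\<close> by simp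
qed

definition counterexample_vals :: "nat \<Rightarrow> nat \<Rightarrow> real" where
  "counterexample_vals i g = [[2, 0, 0, 8], [1, 4, 4, 1], [3, 0, 0, 7]] ! i ! g"

definition certificate_weights :: "nat \<Rightarrow> real" where
  "certificate_weights i = [5, -9, 4] ! i"

lemma certificate_weights_zero_sum: "(\<Sum>i<3. certificate_weights i) = 0"
  by (simp add: certificate_weights_def numeral_3_eq_3)

lemma certificate_weights_positive_on_EQ1:
  assumes "is_alloc 3 4 a" and "EQ1 3 4 counterexample_vals a"
  shows "1 \<le> (\<Sum>i<3. certificate_weights i * val counterexample_vals i (bundle_of 4 a i))"
proof -
  have owner: "a g = 0 \<or> a g = 1 \<or> a g = 2" if "g < 4" for g
    using assms(1) that unfolding is_alloc_def by fastforce
  have EQ1: "\<exists>g\<in>bundle_of 4 a i. val counterexample_vals i (bundle_of 4 a i - {g})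
               \<le> val counterexample_vals j (bundle_of 4 a j)"
    if "i < 3" "j < 3" "bundle_of 4 a i \<noteq> {}" for i j
    using assms(2) that unfolding EQ1_def by blast
  have bundles: "bundle_of 4 a i =
      (if a 3 = i then insert 3 else id) ((if a 2 = i then insert 2 else id)
        ((if a 1 = i then insert 1 else id) (if a 0 = i then {0} else {})))" for i
    by (simp add: numeral_eq_Suc bundle_of_Suc)
  from EQ1[of 0 1] EQ1[of 0 2] EQ1[of 1 0] EQ1[of 1 2] EQ1[of 2 0] EQ1[of 2 1]
    owner[of 0, simplified] owner[of 1, simplified] owner[of 2, simplified] owner[of 3, simplified]
  show ?thesis
    unfolding bundles
    by (elim disjE)
       (simp_all add: val_def counterexample_vals_def certificate_weights_def insert_Diff_if
                      eval_nat_numeral)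
qed

theorem mainTheorem1:
  shows "\<exists>v. nonneg_vals 3 4 v \<and> normalised 3 4 v \<and> \<not> (\<exists>p. EQ_EQ1 3 4 v p)"
proof (intro exI conjI)
  show "nonneg_vals 3 4 counterexample_vals"
    by (auto simp: nonneg_vals_def counterexample_vals_def eval_nat_numeral less_Suc_eq)
  show "normalised 3 4 counterexample_vals"
    by (auto simp: normalised_def val_def counterexample_vals_def eval_nat_numeral less_Suc_eq)
  have "\<not> EQ_EQ1 3 4 counterexample_vals p" for p
    using certificate_weights_zero_sum zero_less_one certificate_weights_positive_on_EQ1
    by (rule not_EQ_EQ1_if_positive_zero_sum_weighting)
  then show "\<not> (\<exists>p. EQ_EQ1 3 4 counterexample_vals p)"
    by simp
qed

end
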